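(* An endomorphism $\varphi$ of a periodic abelian group $A$ is inertial (resp. left-inertial) if and only if its restriction to every primary component $A_p$ of $A$ is inertial (resp. left-inertial) and it acts as a multiplication (resp. an invertible multiplication) on all but finitely many of the primary components $A_p$.
   Context: Abelian groups are written additively. An endomorphism $\varphi$ of $A$ is inertial if $(\varphi(X)+X)/X$ is finite for every subgroup $X\le A$, and left-inertial if $X/(X\cap\varphi(X))$ is finite for every $X\le A$. A multiplication of an abelian $p$-group is the natural action of a $p$-adic integer; it is invertible if it is bijective. Primary components are invariant under every endomorphism. *)

theory Defs
  imports "HOL-Computational_Algebra.Primes"
begin

text \<open>Abelian groups are modelled by a type of class ab_group_add (written additively);
  the group A is the whole type.\<close>

fun nmul :: "nat \<Rightarrow> 'a::ab_group_add \<Rightarrow> 'a" where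
  "nmul 0 a = 0"
| "nmul (Suc n) a = a + nmul n a"

definition zmul :: "int \<Rightarrow> 'a::ab_group_add \<Rightarrow> 'a" where
  "zmul k a = (if 0 \<le> k then nmul (nat k) a else - nmul (nat (- k)) a)"

definition periodic_group :: "'a::ab_group_add itself \<Rightarrow> bool" where
  "periodic_group _ \<longleftrightarrow> (\<forall>a::'a. \<exists>n>0. nmul n a = 0)"

definition subgrp :: "'a::ab_group_add set \<Rightarrow> bool" where
  "subgrp X \<longleftrightarrow> 0 \<in> X \<and> (\<forall>x\<in>X. \<forall>y\<in>X. x - y \<in> X)"

definition endom :: "('a::ab_group_add \<Rightarrow> 'a) \<Rightarrow> bool" where
  "endom f \<longleftrightarrow> (\<forall>x y. f (x + y) = f x + f y)"

definition setsum :: "'a::ab_group_add set \<Rightarrow> 'a set \<Rightarrow> 'a set" where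
  "setsum Y X = {y + x | y x. y \<in> Y \<and> x \<in> X}"

text \<open>The quotient Y/X (for X \<le> Y) is finite: finitely many cosets y + X, y \<in> Y.\<close>
definition finite_quot :: "'a::ab_group_add set \<Rightarrow> 'a set \<Rightarrow> bool" where
  "finite_quot Y X \<longleftrightarrow> finite ((\<lambda>y. (\<lambda>x. y + x) ` X) ` Y)"

definition inertial_on :: "'a::ab_group_add set \<Rightarrow> ('a \<Rightarrow> 'a) \<Rightarrow> bool" where
  "inertial_on S f \<longleftrightarrow> (\<forall>X. subgrp X \<and> X \<subseteq> S \<longrightarrow> finite_quot (setsum (f ` X) X) X)"

definition left_inertial_on :: "'a::ab_group_add set \<Rightarrow> ('a \<Rightarrow> 'a) \<Rightarrow> bool" where
  "left_inertial_on S f \<longleftrightarrow> (\<forall>X. subgrp X \<and> X \<subseteq> S \<longrightarrow> finite_quot X (X \<inter> f ` X))"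

abbreviation inertial :: "('a::ab_group_add \<Rightarrow> 'a) \<Rightarrow> bool" where
  "inertial f \<equiv> inertial_on UNIV f"

abbreviation left_inertial :: "('a::ab_group_add \<Rightarrow> 'a) \<Rightarrow> bool" where
  "left_inertial f \<equiv> left_inertial_on UNIV f"

definition primary :: "nat \<Rightarrow> 'a::ab_group_add set" where
  "primary p = {a. \<exists>n. nmul (p ^ n) a = 0}"

text \<open>p-adic integers as coherent sequences of residues mod p^n.\<close>
definition padic_int :: "nat \<Rightarrow> (nat \<Rightarrow> int) \<Rightarrow> bool" where
  "padic_int p \<alpha> \<longleftrightarrow> (\<forall>n. 0 \<le> \<alpha> n \<and> \<alpha> n < int p ^ n \<and> \<alpha> (Suc n) mod (int p ^ n) = \<alpha> n)"

definition is_multiplication_on :: "nat \<Rightarrow> ('a::ab_group_add \<Rightarrow> 'a) \<Rightarrow> bool" where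
  "is_multiplication_on p f \<longleftrightarrow> (\<exists>\<alpha>. padic_int p \<alpha> \<and>
     (\<forall>b n. nmul (p ^ n) b = 0 \<longrightarrow> f b = zmul (\<alpha> n) b))"

definition is_inv_multiplication_on :: "nat \<Rightarrow> ('a::ab_group_add \<Rightarrow> 'a) \<Rightarrow> bool" where
  "is_inv_multiplication_on p f \<longleftrightarrow> is_multiplication_on p f \<and> bij_betw f (primary p) (primary p)"

end

theory Submission
  imports Defs "HOL-Library.FuncSet"
begin

text \<open>An endomorphism \<open>\<phi>\<close> acts on \<open>A\<^sub>p\<close> as a multiplication exactly when it maps every cyclic
  subgroup \<open>\<langle>a\<rangle>\<close> of \<open>A\<^sub>p\<close> into itself, and as an invertible multiplication exactly when
  \<open>a \<in> \<phi>\<langle>a\<rangle>\<close> for all \<open>a \<in> A\<^sub>p\<close>. If this fails for infinitely many primes, choose witnesses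
  \<open>a\<^sub>p \<in> A\<^sub>p\<close> and let \<open>X\<close> be the subgroup they generate. An integer prime to \<open>p\<close> kills all other
  primary components and is invertible on \<open>A\<^sub>p\<close>, so the elements \<open>\<phi> a\<^sub>p\<close> (resp. \<open>a\<^sub>p\<close>) lie in
  pairwise distinct cosets of \<open>X\<close> (resp. \<open>X \<inter> \<phi> X\<close>), and \<open>\<phi>\<close> is not (left-)inertial.
  Conversely, every element of a subgroup \<open>X\<close> is a sum of primary components lying in \<open>X\<close>; for the
  cofinitely many primes where \<open>\<phi>\<close> is an (invertible) multiplication these components, and their
  images, already lie in \<open>X\<close> (resp. \<open>\<phi> X\<close>), so \<open>(\<phi> X + X)/X\<close> (resp. \<open>X/(X \<inter> \<phi> X)\<close>) is covered by
  finitely many of the corresponding quotients inside the components \<open>A\<^sub>p\<close>.\<close>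

section \<open>Integer multiples\<close>

lemma nmul_add: "nmul (m + n) a = nmul m a + nmul n a"
  by (induct m) (simp_all add: add.assoc)

lemma nmul_zero [simp]: "nmul n (0::'a::ab_group_add) = 0"
  by (induct n) simp_all

lemma nmul_distrib: "nmul n (a + b) = nmul n a + nmul n (b::'a::ab_group_add)"
  by (induct n) (simp_all add: algebra_simps)

lemma nmul_minus: "nmul n (- a) = - nmul n (a::'a::ab_group_add)"
  by (induct n) (simp_all add: algebra_simps)

lemma nmul_diff: "nmul n (a - b) = nmul n a - nmul n (b::'a::ab_group_add)"
  using nmul_distrib[of n a "- b"] by (simp add: nmul_minus)

lemma nmul_mult: "nmul (m * n) a = nmul m (nmul n (a::'a::ab_group_add))"
  by (induct m) (simp_all add: nmul_add)

lemma zmul_conv_nmul: "zmul k a = nmul (nat k) a - nmul (nat (- k)) a"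
  by (simp add: zmul_def)

lemma zmul_of_nat [simp]: "zmul (int n) a = nmul n a"
  by (simp add: zmul_def)

lemma zmul_0 [simp]: "zmul 0 a = 0"
  by (simp add: zmul_def)

lemma zmul_1 [simp]: "zmul 1 a = a"
  by (simp add: zmul_def)

lemma zmul_zero [simp]: "zmul k (0::'a::ab_group_add) = 0"
  by (simp add: zmul_def)

lemma zmul_diff_of_nat: "zmul (int m - int n) a = nmul m a - nmul n a"
proof (cases "n \<le> m")
  case True
  then have e: "int m - int n = int (m - n)"
    by simp
  have "nmul m a = nmul (m - n) a + nmul n a"
    using True nmul_add[of "m - n" n a] by simp
  then show ?thesis
    unfolding e zmul_def by simp
next
  case False
  then have e: "int m - int n = - int (n - m)"
    by simp
  have "nmul n a = nmul (n - m) a + nmul m a"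
    using False nmul_add[of "n - m" m a] by simp
  moreover have "\<not> 0 \<le> - int (n - m)" "nat (- (- int (n - m))) = n - m"
    using False by simp_all
  ultimately show ?thesis
    unfolding e zmul_def by (simp only: if_False) (simp add: algebra_simps)
qed

lemma zmul_add: "zmul (k + l) a = zmul k a + zmul l a"
proof -
  have "k + l = int (nat k + nat l) - int (nat (- k) + nat (- l))"
    by simp
  then have "zmul (k + l) a = nmul (nat k + nat l) a - nmul (nat (- k) + nat (- l)) a"
    by (metis zmul_diff_of_nat)
  then show ?thesis
    by (simp add: zmul_conv_nmul nmul_add)
qed

lemma zmul_uminus: "zmul (- k) a = - zmul k a"
  by (simp add: zmul_conv_nmul)

lemma zmul_diff: "zmul (k - l) a = zmul k a - zmul l a"
  using zmul_add[of k "- l" a] zmul_uminus[of l a] by simp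

lemma zmul_distrib: "zmul k (a + b) = zmul k a + zmul k (b::'a::ab_group_add)"
  by (simp add: zmul_conv_nmul nmul_distrib algebra_simps)

lemma zmul_minus: "zmul k (- a) = - zmul k (a::'a::ab_group_add)"
  by (simp add: zmul_conv_nmul nmul_minus algebra_simps)

lemma zmul_distrib_diff: "zmul k (a - b) = zmul k a - zmul k (b::'a::ab_group_add)"
  using zmul_distrib[of k a "- b"] zmul_minus[of k b] by simp

lemma zmul_mult: "zmul (k * l) a = zmul k (zmul l a)"
proof -
  have of_nat_mult: "zmul (int m * l) a = nmul m (zmul l a)" for m
    by (induct m) (simp_all add: zmul_add algebra_simps)
  have "k = int (nat k) - int (nat (- k))"
    by simp
  then have "k * l = int (nat k) * l - int (nat (- k)) * l"
    by (metis left_diff_distrib)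
  then have "zmul (k * l) a = zmul (int (nat k) * l) a - zmul (int (nat (- k)) * l) a"
    by (metis zmul_diff)
  then show ?thesis
    by (simp only: of_nat_mult zmul_conv_nmul[of k])
qed

lemma zmul_of_nat_power: "zmul (int p ^ n) a = nmul (p ^ n) a"
  by (metis of_nat_power zmul_of_nat)

lemma endom_0: "endom f \<Longrightarrow> f 0 = 0"
  unfolding endom_def by (metis add_cancel_right_right add_0)

lemma endom_add: "endom f \<Longrightarrow> f (a + b) = f a + f b"
  by (simp add: endom_def)

lemma endom_minus: "endom f \<Longrightarrow> f (- a) = - f a"
  unfolding endom_def by (metis add.right_inverse add_eq_0_iff endom_0 endom_def)

lemma endom_diff: "endom f \<Longrightarrow> f (a - b) = f a - f b"
  using endom_minus[of f b] unfolding endom_def by (metis diff_conv_add_uminus)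

lemma endom_nmul: "endom f \<Longrightarrow> f (nmul n a) = nmul n (f a)"
  by (induct n) (simp_all add: endom_0 endom_add)

lemma endom_zmul: "endom f \<Longrightarrow> f (zmul k a) = zmul k (f a)"
  by (simp add: zmul_conv_nmul endom_diff endom_nmul)

lemma endom_sum: "endom f \<Longrightarrow> f (sum g F) = (\<Sum>x\<in>F. f (g x))"
  by (induct F rule: infinite_finite_induct) (simp_all add: endom_0 endom_add)

lemma subgrp_0: "subgrp X \<Longrightarrow> 0 \<in> X"
  by (simp add: subgrp_def)

lemma subgrp_diff: "subgrp X \<Longrightarrow> a \<in> X \<Longrightarrow> b \<in> X \<Longrightarrow> a - b \<in> X"
  by (simp add: subgrp_def)

lemma subgrp_minus: "subgrp X \<Longrightarrow> a \<in> X \<Longrightarrow> - a \<in> X"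
  by (metis subgrp_def diff_0)

lemma subgrp_add: "subgrp X \<Longrightarrow> a \<in> X \<Longrightarrow> b \<in> X \<Longrightarrow> a + b \<in> X"
  by (metis subgrp_diff subgrp_minus diff_minus_eq_add)

lemma subgrp_zmul: "subgrp X \<Longrightarrow> a \<in> X \<Longrightarrow> zmul k a \<in> X"
proof -
  assume X: "subgrp X" and a: "a \<in> X"
  have "nmul n a \<in> X" for n
    by (induct n) (simp_all add: X a subgrp_0 subgrp_add)
  then show ?thesis
    by (simp add: zmul_conv_nmul subgrp_diff X)
qed

lemma subgrp_sum: "subgrp X \<Longrightarrow> (\<And>x. x \<in> F \<Longrightarrow> g x \<in> X) \<Longrightarrow> sum g F \<in> X"
  by (induct F rule: infinite_finite_induct) (simp_all add: subgrp_0 subgrp_add)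

lemma subgrp_Int: "subgrp X \<Longrightarrow> subgrp Y \<Longrightarrow> subgrp (X \<inter> Y)"
  by (simp add: subgrp_def)

lemma subgrp_image:
  assumes f: "endom f" and X: "subgrp X"
  shows "subgrp (f ` X)"
  unfolding subgrp_def
proof (intro conjI ballI)
  show "0 \<in> f ` X"
    using subgrp_0[OF X] endom_0[OF f] by (metis image_eqI)
  fix x y assume "x \<in> f ` X" "y \<in> f ` X"
  then obtain a b where "a \<in> X" "b \<in> X" "x = f a" "y = f b"
    by blast
  then show "x - y \<in> f ` X"
    using endom_diff[OF f, of a b] subgrp_diff[OF X] by (metis image_eqI)
qed

definition zspan :: "'a::ab_group_add \<Rightarrow> 'a set" where
  "zspan a = range (\<lambda>k. zmul k a)"

lemma zspan_iff: "x \<in> zspan a \<longleftrightarrow> (\<exists>k. x = zmul k a)"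
  by (auto simp: zspan_def)

lemma zspan_0 [simp]: "0 \<in> zspan a"
  unfolding zspan_iff by (metis zmul_0)

lemma zspan_self [simp]: "a \<in> zspan a"
  unfolding zspan_iff by (metis zmul_1)

lemma zspan_add: "x \<in> zspan a \<Longrightarrow> y \<in> zspan a \<Longrightarrow> x + y \<in> zspan a"
  unfolding zspan_iff by (metis zmul_add)

lemma zspan_zmul: "x \<in> zspan a \<Longrightarrow> zmul k x \<in> zspan a"
  unfolding zspan_iff by (metis zmul_mult)

lemma zspan_trans: "x \<in> zspan a \<Longrightarrow> a \<in> zspan b \<Longrightarrow> x \<in> zspan b"
  unfolding zspan_iff by (metis zmul_mult)

lemma zspan_subgrp: "subgrp X \<Longrightarrow> a \<in> X \<Longrightarrow> zspan a \<subseteq> X"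
  using subgrp_zmul by (auto simp: zspan_def)

lemma subgrp_zspan: "subgrp (zspan a)"
  unfolding subgrp_def
proof (intro conjI ballI)
  show "0 \<in> zspan a"
    by simp
  fix x y
  assume "x \<in> zspan a" "y \<in> zspan a"
  then obtain k l where "x = zmul k a" "y = zmul l a"
    by (auto simp: zspan_iff)
  then have "x - y = zmul (k - l) a"
    by (simp add: zmul_diff)
  then show "x - y \<in> zspan a"
    by (auto simp: zspan_iff)
qed

section \<open>Primary components\<close>

abbreviation pow_kills :: "nat \<Rightarrow> nat \<Rightarrow> 'a::ab_group_add \<Rightarrow> bool" where
  "pow_kills p n b \<equiv> nmul (p ^ n) b = 0"

lemma pow_kills_mono:
  assumes "pow_kills p m b" "m \<le> n"
  shows "pow_kills p n b"
proof -
  have "p ^ n = p ^ (n - m) * p ^ m"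
    using assms(2) by (simp add: power_add[symmetric])
  then show ?thesis
    using assms(1) by (simp add: nmul_mult)
qed

lemma pow_kills_zmul: "pow_kills p n b \<Longrightarrow> pow_kills p n (zmul k b)"
  using zmul_mult[of k "int p ^ n" b] zmul_mult[of "int p ^ n" k b]
  by (simp add: mult.commute zmul_of_nat_power)

lemma pow_kills_add: "pow_kills p n a \<Longrightarrow> pow_kills p n b \<Longrightarrow> pow_kills p n (a + b)"
  by (simp add: nmul_distrib)

lemma pow_kills_diff: "pow_kills p n a \<Longrightarrow> pow_kills p n b \<Longrightarrow> pow_kills p n (a - b)"
  using pow_kills_add[of p n a "- b"] by (simp add: nmul_minus)

lemma pow_kills_endom: "endom f \<Longrightarrow> pow_kills p n b \<Longrightarrow> pow_kills p n (f b)"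
  by (metis endom_0 endom_nmul)

lemma zmul_cong_pow:
  assumes "pow_kills p n b" "int p ^ n dvd k - l"
  shows "zmul k b = zmul l b"
proof -
  obtain t where "k - l = t * int p ^ n"
    using assms(2) by (auto simp: dvd_def mult.commute)
  then have "zmul (k - l) b = zmul t (nmul (p ^ n) b)"
    by (simp add: zmul_mult zmul_of_nat_power)
  then show ?thesis
    using assms(1) by (simp add: zmul_diff)
qed

lemma primary_iff: "b \<in> primary p \<longleftrightarrow> (\<exists>n. pow_kills p n b)"
  by (simp add: primary_def)

lemma primary_0 [simp]: "0 \<in> primary p"
  by (auto simp: primary_iff)

lemma primary_add:
  assumes "a \<in> primary p" "b \<in> primary p"
  shows "a + b \<in> primary p"
proof -
  obtain m n where "pow_kills p m a" "pow_kills p n b"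
    using assms by (auto simp: primary_iff)
  then have "pow_kills p (max m n) a" "pow_kills p (max m n) b"
    using pow_kills_mono by (metis max.cobounded1, metis max.cobounded2)
  then show ?thesis
    unfolding primary_iff using pow_kills_add by blast
qed

lemma primary_diff: "a \<in> primary p \<Longrightarrow> b \<in> primary p \<Longrightarrow> a - b \<in> primary p"
  using primary_add[of a p "- b"] by (simp add: primary_iff nmul_minus)

lemma primary_endom: "endom f \<Longrightarrow> a \<in> primary p \<Longrightarrow> f a \<in> primary p"
  unfolding primary_iff using pow_kills_endom by blast

lemma subgrp_primary: "subgrp (primary p)"
  by (simp add: subgrp_def primary_diff)

lemma exact_exponent:
  assumes "b \<in> primary p" "b \<noteq> 0"
  obtains j where "pow_kills p (Suc j) b" "\<not> pow_kills p j b"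
proof -
  define m where "m = (LEAST m. pow_kills p m b)"
  obtain n where "pow_kills p n b"
    using assms(1) by (auto simp: primary_iff)
  then have m: "pow_kills p m b"
    unfolding m_def by (rule LeastI)
  then have "m \<noteq> 0"
    using assms(2) by (intro notI) simp
  moreover have "\<not> pow_kills p (m - 1) b"
    using \<open>m \<noteq> 0\<close> not_less_Least[of "m - 1" "\<lambda>m. pow_kills p m b"] by (simp add: m_def)
  ultimately show ?thesis
    using that[of "m - 1"] m by simp
qed

lemma gcd_prime_power:
  assumes "prime p"
  obtains i where "i \<le> m" "gcd d (int p ^ m) = int p ^ i"
proof -
  have "prime (int p)"
    using assms by simp
  moreover have "gcd d (int p ^ m) dvd int p ^ m"
    by simp
  ultimately obtain i where "i \<le> m" "normalize (gcd d (int p ^ m)) = int p ^ i"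
    using divides_primepow by metis
  then show ?thesis
    using that by simp
qed

lemma exact_order_dvd:
  assumes p: "prime p" and exact: "pow_kills p (Suc j) a" "\<not> pow_kills p j a"
    and d: "zmul d a = 0"
  shows "int p ^ Suc j dvd d"
proof -
  obtain i where i: "i \<le> Suc j" "gcd d (int p ^ Suc j) = int p ^ i"
    using gcd_prime_power[OF p] by blast
  obtain u v where uv: "u * d + v * int p ^ Suc j = gcd d (int p ^ Suc j)"
    using bezout_int by blast
  have "zmul (gcd d (int p ^ Suc j)) a = 0"
    using exact(1) by (simp add: uv[symmetric] zmul_add zmul_mult d zmul_of_nat_power
        del: power_Suc)
  then have "pow_kills p i a"
    using i(2) by (simp add: zmul_of_nat_power)
  then have "i = Suc j"
    using i(1) exact(2) pow_kills_mono[of p i a j] by (cases "i \<le> j") auto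
  then show ?thesis
    using i(2) by (metis gcd_dvd1)
qed

text \<open>\<open>p^j b\<close> spans the socle of \<open>\<langle>b\<rangle>\<close>, which lies in every nonzero subgroup of \<open>\<langle>b\<rangle>\<close>.\<close>
lemma socle_in_zspan:
  assumes p: "prime p" and exact: "pow_kills p (Suc j) b" "\<not> pow_kills p j b"
    and d: "zmul d b \<noteq> 0"
  shows "nmul (p ^ j) b \<in> zspan (zmul d b)"
proof -
  obtain i where i: "i \<le> Suc j" "gcd d (int p ^ Suc j) = int p ^ i"
    using gcd_prime_power[OF p] by blast
  obtain u v where uv: "u * d + v * int p ^ Suc j = gcd d (int p ^ Suc j)"
    using bezout_int by blast
  have "zmul (gcd d (int p ^ Suc j)) b = zmul u (zmul d b)"
    unfolding uv[symmetric] zmul_add zmul_mult zmul_of_nat_power using exact(1) by simp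
  then have gen: "zmul (int p ^ i) b \<in> zspan (zmul d b)"
    using i(2) unfolding zspan_iff by metis
  have "i \<noteq> Suc j"
  proof
    assume "i = Suc j"
    then have "int p ^ Suc j dvd d - 0"
      using i(2) by (metis gcd_dvd1 diff_zero)
    then show False
      using zmul_cong_pow[OF exact(1)] d by fastforce
  qed
  then have "p ^ j = p ^ (j - i) * p ^ i"
    using i(1) by (simp add: power_add[symmetric])
  then have "nmul (p ^ j) b = zmul (int p ^ (j - i)) (zmul (int p ^ i) b)"
    by (simp add: zmul_of_nat_power nmul_mult)
  then show ?thesis
    using gen zspan_zmul by metis
qed

lemma coprime_zmul_inverse:
  assumes "pow_kills p n y" "coprime N (int p)"
  obtains M where "zmul (M * N) y = y"
proof -
  have "coprime N (int p ^ n)"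
    using assms(2) by simp
  then obtain u v where uv: "u * N + v * int p ^ n = 1"
    using bezout_int[of N "int p ^ n"] by auto
  then have "u * N = 1 - v * int p ^ n"
    by simp
  then have "zmul (u * N) y = y - zmul v (nmul (p ^ n) y)"
    by (simp add: zmul_diff zmul_mult zmul_of_nat_power)
  then show ?thesis
    using that assms(1) by simp
qed

section \<open>Multiplications\<close>

lemma zmul_mod_pow: "pow_kills p n b \<Longrightarrow> zmul (k mod int p ^ n) b = zmul k b"
  using zmul_cong_pow[OF _ dvd_minus_mod] by metis

lemma exact_order_zmul_eq_imp_mod_eq:
  assumes "prime p" "pow_kills p (Suc n) a" "\<not> pow_kills p n a" "zmul k a = zmul l a"
  shows "k mod int p ^ Suc n = l mod int p ^ Suc n"
proof -
  have "zmul (k - l) a = 0"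
    using assms(4) by (simp add: zmul_diff)
  then have "int p ^ Suc n dvd k - l"
    by (rule exact_order_dvd[OF assms(1-3)])
  then show ?thesis
    by (simp only: mod_eq_dvd_iff)
qed

lemma lower_exponent_mod_zspan:
  assumes p: "prime p" and exact: "pow_kills p (Suc m) a" "\<not> pow_kills p m a"
    and j: "j \<le> m" and b: "pow_kills p (Suc j) b" "nmul (p ^ j) b \<in> zspan a"
  obtains c where "pow_kills p j (b - zmul c a)"
proof -
  obtain r where r: "nmul (p ^ j) b = zmul r a"
    using b(2) by (auto simp: zspan_iff)
  have "nmul (p ^ Suc j) b = nmul p (nmul (p ^ j) b)"
    by (simp add: nmul_mult)
  then have "zmul (int p * r) a = 0"
    using b(1) by (simp add: r zmul_mult)
  then have "int p ^ Suc m dvd int p * r"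
    by (rule exact_order_dvd[OF p exact])
  moreover have "p \<noteq> 0"
    using p by auto
  ultimately obtain v where v: "r = int p ^ m * v"
    by (auto simp: dvd_def)
  define c where "c = v * int p ^ (m - j)"
  have "zmul (int p ^ j * c) a = zmul r a"
    using j by (simp add: c_def v algebra_simps power_add[symmetric])
  then have "pow_kills p j (b - zmul c a)"
    by (simp add: nmul_diff zmul_mult zmul_of_nat_power r)
  then show ?thesis
    using that by blast
qed

lemma endom_eq_zmul_if_socle_outside_zspan:
  assumes p: "prime p" and f: "endom f" and pw: "\<forall>x\<in>primary p. f x \<in> zspan x"
    and exact: "pow_kills p (Suc m) a" "\<not> pow_kills p m a" and k: "f a = zmul k a"
    and b: "pow_kills p (Suc m) b" "pow_kills p (Suc j) b" "\<not> pow_kills p j b"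
    and outside: "nmul (p ^ j) b \<notin> zspan a"
  shows "f b = zmul k b"
proof -
  have a_p: "a \<in> primary p" and b_p: "b \<in> primary p"
    using exact(1) b(1) unfolding primary_iff by blast+
  obtain kb where kb: "f b = zmul kb b"
    using pw b_p by (auto simp: zspan_iff)
  obtain c where c: "f (a + b) = zmul c (a + b)"
    using pw primary_add[OF a_p b_p] by (auto simp: zspan_iff)
  have eq: "zmul (c - k) a = zmul (kb - c) b"
    using c by (simp add: endom_add[OF f] k kb zmul_distrib zmul_diff algebra_simps)
  have "zmul (kb - c) b = 0"
  proof (rule ccontr)
    assume "zmul (kb - c) b \<noteq> 0"
    then have "nmul (p ^ j) b \<in> zspan (zmul (c - k) a)"
      using socle_in_zspan[OF p b(2,3)] eq by simp
    then show False
      using outside zspan_trans zspan_zmul[OF zspan_self] by blast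
  qed
  then have "int p ^ Suc m dvd c - k"
    using exact_order_dvd[OF p exact] eq by simp
  then have "zmul c b = zmul k b"
    by (rule zmul_cong_pow[OF b(1)])
  with \<open>zmul (kb - c) b = 0\<close> show ?thesis
    by (simp add: kb zmul_diff)
qed

text \<open>An element \<open>a\<close> of maximal order \<open>p^(m+1)\<close> fixes the multiplier; every other element
  is reduced, by subtracting multiples of \<open>a\<close>, to one of smaller order or to one whose socle
  meets \<open>\<langle>a\<rangle>\<close> trivially.\<close>
lemma endom_eq_zmul_on_layer:
  assumes p: "prime p" and f: "endom f" and pw: "\<forall>x\<in>primary p. f x \<in> zspan x"
    and exact: "pow_kills p (Suc m) a" "\<not> pow_kills p m a" and k: "f a = zmul k a"
    and b: "pow_kills p (Suc m) b" "pow_kills p j b"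
  shows "f b = zmul k b"
  using b
proof (induct j arbitrary: b)
  case 0
  then show ?case
    by (simp add: endom_0[OF f])
next
  case (Suc j)
  show ?case
  proof (cases "pow_kills p j b")
    case True
    then show ?thesis
      using Suc by blast
  next
    case not_j: False
    then have "j \<le> m"
      using pow_kills_mono[OF Suc.prems(1), of j] by (cases "j \<le> m") auto
    show ?thesis
    proof (cases "nmul (p ^ j) b \<in> zspan a")
      case True
      then obtain c where c: "pow_kills p j (b - zmul c a)"
        using lower_exponent_mod_zspan[OF p exact \<open>j \<le> m\<close> Suc.prems(2)] by blast
      have "pow_kills p (Suc m) (b - zmul c a)"
        using Suc.prems(1) exact(1) by (simp add: pow_kills_diff pow_kills_zmul del: power_Suc)
      then have "f (b - zmul c a) = zmul k (b - zmul c a)"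
        using Suc.hyps c by blast
      then show ?thesis
        by (simp add: endom_diff[OF f] endom_zmul[OF f] k zmul_distrib_diff
            zmul_mult[symmetric] mult.commute)
    next
      case False
      then show ?thesis
        using endom_eq_zmul_if_socle_outside_zspan[OF p f pw exact k Suc.prems not_j] by blast
    qed
  qed
qed

lemma endom_eq_zmul_on_pow_torsion:
  assumes p: "prime p" and f: "endom f" and pw: "\<forall>x\<in>primary p. f x \<in> zspan x"
  obtains k where "\<And>b. pow_kills p n b \<Longrightarrow> f b = zmul k b"
proof (cases "\<forall>b::'a. pow_kills p n b \<longrightarrow> b = 0")
  case True
  then show ?thesis
    using that[of 0] endom_0[OF f] by force
next
  case False
  define m where "m = (LEAST m. \<forall>b::'a. pow_kills p n b \<longrightarrow> pow_kills p m b)"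
  have bound: "pow_kills p m b" if "pow_kills p n b" for b :: 'a
    using LeastI[of "\<lambda>m. \<forall>b::'a. pow_kills p n b \<longrightarrow> pow_kills p m b" n] that
    by (simp add: m_def)
  have "m \<noteq> 0"
    using False bound by fastforce
  then obtain m' where m': "m = Suc m'"
    using not0_implies_Suc by blast
  then have "m' < m"
    by simp
  then have "\<not> (\<forall>b::'a. pow_kills p n b \<longrightarrow> pow_kills p m' b)"
    unfolding m_def by (rule not_less_Least)
  then obtain a :: 'a where a: "pow_kills p n a" "\<not> pow_kills p m' a"
    by blast
  then have "a \<in> primary p"
    unfolding primary_iff by blast
  then obtain k where k: "f a = zmul k a"
    using pw by (auto simp: zspan_iff)
  show ?thesis
  proof (rule that)
    fix b :: 'a
    assume "pow_kills p n b"
    then show "f b = zmul k b"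
      using endom_eq_zmul_on_layer[OF p f pw bound[OF a(1), unfolded m'] a(2) k]
        bound[unfolded m'] by blast
  qed
qed

lemma padic_int_mod:
  assumes "prime p"
  shows "padic_int p (\<lambda>n. k mod int p ^ n)"
proof -
  have "0 < int p ^ n" for n
    using assms by (simp add: prime_gt_0_nat)
  moreover have "int p ^ n dvd int p ^ Suc n" for n
    by simp
  ultimately show ?thesis
    unfolding padic_int_def by (simp add: mod_mod_cancel del: power_Suc)
qed

lemma exists_exact_order:
  assumes unbounded: "\<forall>N. \<exists>b\<in>primary p. \<not> pow_kills p N (b::'a::ab_group_add)"
  obtains a :: "'a::ab_group_add" where "pow_kills p (Suc n) a" "\<not> pow_kills p n a"
proof -
  obtain b :: 'a where b: "b \<in> primary p" "\<not> pow_kills p n b"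
    using unbounded by blast
  then obtain j where j: "pow_kills p (Suc j) b" "\<not> pow_kills p j b"
    using exact_exponent[of b p] by force
  have "n \<le> j"
    using pow_kills_mono[OF j(1), of n] b(2) by (cases "n \<le> j") auto
  then have "p ^ Suc n * p ^ (j - n) = p ^ Suc j" "p ^ n * p ^ (j - n) = p ^ j"
    by (simp_all add: power_add[symmetric])
  then have "pow_kills p (Suc n) (nmul (p ^ (j - n)) b)" "\<not> pow_kills p n (nmul (p ^ (j - n)) b)"
    using j by (simp_all only: nmul_mult[symmetric] not_False_eq_True)
  then show ?thesis
    by (rule that)
qed

text \<open>Elements of exact order \<open>p^n\<close> determine the multipliers modulo \<open>p^n\<close>, so they cohere.\<close>
lemma padic_int_of_layer_multipliers:
  fixes f :: "'a::ab_group_add \<Rightarrow> 'a"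
  assumes p: "prime p" and unbounded: "\<forall>N. \<exists>b\<in>primary p. \<not> pow_kills p N (b::'a)"
    and \<alpha>: "\<And>n b. pow_kills p n b \<Longrightarrow> f b = zmul (\<alpha> n) b"
    and range: "\<And>n. 0 \<le> \<alpha> n \<and> \<alpha> n < int p ^ n"
  shows "padic_int p \<alpha>"
proof -
  have "\<alpha> (Suc n) mod int p ^ n = \<alpha> n" for n
  proof (cases n)
    case 0
    then show ?thesis
      using range[of 0] by simp
  next
    case (Suc n')
    obtain a :: 'a where a: "pow_kills p (Suc n') a" "\<not> pow_kills p n' a"
      using exists_exact_order[OF unbounded] by blast
    have "pow_kills p (Suc (Suc n')) a"
      using pow_kills_mono[OF a(1), of "Suc (Suc n')"] by (simp del: power_Suc)
    then have "zmul (\<alpha> (Suc (Suc n'))) a = zmul (\<alpha> (Suc n')) a"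
      using \<alpha> a(1) by metis
    then have "\<alpha> (Suc (Suc n')) mod int p ^ Suc n' = \<alpha> (Suc n') mod int p ^ Suc n'"
      by (rule exact_order_zmul_eq_imp_mod_eq[OF p a])
    then show ?thesis
      using Suc range[of n] by simp
  qed
  then show ?thesis
    unfolding padic_int_def using range by simp
qed

lemma is_multiplication_onI:
  assumes p: "prime p" and f: "endom f" and pw: "\<forall>x\<in>primary p. f x \<in> zspan x"
  shows "is_multiplication_on p f"
proof (cases "\<exists>N. \<forall>b\<in>primary p. pow_kills p N (b::'a)")
  case True
  then obtain N where N: "\<forall>b\<in>primary p. pow_kills p N (b::'a)"
    by blast
  obtain k where k: "\<And>b. pow_kills p N b \<Longrightarrow> f b = zmul k b"
    using endom_eq_zmul_on_pow_torsion[OF p f pw] by blast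
  have "f b = zmul (k mod int p ^ n) b" if "pow_kills p n b" for n b
  proof -
    have "b \<in> primary p"
      using that unfolding primary_iff by blast
    then show ?thesis
      using k N zmul_mod_pow[OF that] by simp
  qed
  then show ?thesis
    unfolding is_multiplication_on_def using padic_int_mod[OF p] by blast
next
  case False
  have "\<forall>n. \<exists>k. \<forall>b. pow_kills p n b \<longrightarrow> f b = zmul k b"
    using endom_eq_zmul_on_pow_torsion[OF p f pw] by blast
  then obtain \<beta> where \<beta>: "\<And>n b. pow_kills p n b \<Longrightarrow> f b = zmul (\<beta> n) b"
    by (metis choice)
  define \<alpha> where "\<alpha> n = \<beta> n mod int p ^ n" for n
  have \<alpha>: "f b = zmul (\<alpha> n) b" if "pow_kills p n b" for n b
    using \<beta>[OF that] zmul_mod_pow[OF that] by (simp add: \<alpha>_def)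
  have "0 \<le> \<alpha> n \<and> \<alpha> n < int p ^ n" for n
    using p by (simp add: \<alpha>_def prime_gt_0_nat)
  with False \<alpha> have "padic_int p \<alpha>"
    using padic_int_of_layer_multipliers[OF p] by blast
  then show ?thesis
    unfolding is_multiplication_on_def using \<alpha> by blast
qed

lemma is_multiplication_on_zspan:
  assumes "is_multiplication_on p f" "b \<in> primary p"
  shows "f b \<in> zspan b"
  using assms by (auto simp: is_multiplication_on_def primary_iff zspan_iff)

lemma is_multiplication_on_iff:
  assumes "prime p" "endom f"
  shows "is_multiplication_on p f \<longleftrightarrow> (\<forall>x\<in>primary p. f x \<in> zspan x)"
  using is_multiplication_onI[OF assms] is_multiplication_on_zspan by blast

lemma multiplier_coprime_if_inj:
  fixes f :: "'a::ab_group_add \<Rightarrow> 'a" and c :: 'a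
  assumes p: "prime p" and f: "endom f" and inj: "inj_on f (primary p)"
    and k: "\<And>b. pow_kills p n b \<Longrightarrow> f b = zmul k b"
    and c: "pow_kills p n c" "c \<noteq> 0"
  shows "coprime k (int p)"
proof (rule ccontr)
  assume "\<not> coprime k (int p)"
  then have "int p dvd k"
    using p by (metis coprime_commute prime_imp_coprime prime_nat_int_transfer)
  then obtain t where t: "k = int p * t"
    by (auto simp: dvd_def)
  obtain j where j: "pow_kills p (Suc j) c" "\<not> pow_kills p j c"
    using exact_exponent[of c p] c unfolding primary_iff by blast
  define w where "w = nmul (p ^ j) c"
  have "nmul p w = 0"
    using j(1) by (simp add: w_def nmul_mult[symmetric] mult.commute)
  have "pow_kills p n w"
    using pow_kills_zmul[OF c(1), of "int p ^ j"] by (simp add: w_def zmul_of_nat_power)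
  then have "f w = zmul t (nmul p w)"
    using k by (simp add: t zmul_mult mult.commute[of "int p"])
  then have "f w = f 0"
    using \<open>nmul p w = 0\<close> by (simp add: endom_0[OF f])
  moreover have "w \<in> primary p"
    using \<open>pow_kills p n w\<close> unfolding primary_iff by blast
  ultimately have "w = 0"
    using inj by (auto dest: inj_onD)
  then show False
    using j(2) by (simp add: w_def)
qed

lemma is_inv_multiplication_on_onto:
  assumes p: "prime p" and f: "endom f" and inv: "is_inv_multiplication_on p f"
    and c: "c \<in> primary p"
  shows "c \<in> f ` zspan c"
proof (cases "c = 0")
  case True
  then show ?thesis
    using endom_0[OF f] by force
next
  case False
  obtain \<alpha> where \<alpha>: "\<And>b n. pow_kills p n b \<Longrightarrow> f b = zmul (\<alpha> n) b"
    using inv by (auto simp: is_inv_multiplication_on_def is_multiplication_on_def)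
  have inj: "inj_on f (primary p)"
    using inv by (simp add: is_inv_multiplication_on_def bij_betw_def)
  obtain n where n: "pow_kills p n c"
    using c by (auto simp: primary_iff)
  have "coprime (\<alpha> n) (int p)"
    using multiplier_coprime_if_inj[OF p f inj \<alpha> n False] .
  then obtain M where "zmul (M * \<alpha> n) c = c"
    using coprime_zmul_inverse[OF n] by blast
  then have "c = f (zmul M c)"
    by (simp add: endom_zmul[OF f] \<alpha>[OF n] zmul_mult)
  then show ?thesis
    by (rule image_eqI[OF _ zspan_zmul[OF zspan_self]])
qed

text \<open>Since \<open>a \<in> p\<langle>f a\<rangle>\<close>, whereas \<open>f a\<close> is killed by every power of \<open>p\<close> killing \<open>a\<close>, the
  exponent of \<open>a\<close> can be lowered indefinitely.\<close>
lemma eq_0_if_pdvd_multiple_of_image: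
  assumes f: "endom f" and a: "a = zmul (int p * t) (f a)"
  shows "pow_kills p n a \<Longrightarrow> a = 0"
proof (induct n)
  case 0
  then show ?case
    by simp
next
  case (Suc n)
  have "pow_kills p (Suc n) (f a)"
    using pow_kills_endom[OF f Suc.prems] .
  moreover have "nmul (p ^ n) (zmul (int p * t) (f a)) = zmul t (nmul (p ^ Suc n) (f a))"
    by (simp only: zmul_of_nat_power[symmetric] zmul_mult[symmetric]) (simp add: ac_simps)
  ultimately have "pow_kills p n (zmul (int p * t) (f a))"
    by simp
  then show ?case
    using Suc.hyps a by simp
qed

lemma in_image_zspan_iff:
  assumes "endom f"
  shows "x \<in> f ` zspan x \<longleftrightarrow> x \<in> zspan (f x)"
proof
  assume "x \<in> f ` zspan x"
  then obtain y where y: "y \<in> zspan x" "x = f y"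
    by (rule imageE)
  then obtain k where k: "y = zmul k x"
    unfolding zspan_iff by blast
  have "x = f (zmul k x)"
    using y(2) unfolding k .
  then have "x = zmul k (f x)"
    using endom_zmul[OF assms, of k x] by (rule trans)
  then show "x \<in> zspan (f x)"
    unfolding zspan_iff by blast
next
  assume "x \<in> zspan (f x)"
  then obtain k where "x = zmul k (f x)"
    unfolding zspan_iff by blast
  then have "x = f (zmul k x)"
    using endom_zmul[OF assms, of k x] by (rule trans[OF _ sym])
  then show "x \<in> f ` zspan x"
    by (rule image_eqI[OF _ zspan_zmul[OF zspan_self]])
qed

lemma image_in_zspan_if_in_zspan_image:
  assumes p: "prime p" and f: "endom f" and x: "x \<in> primary p" "x \<in> zspan (f x)"
  shows "f x \<in> zspan x"
proof -
  obtain k where k: "x = zmul k (f x)"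
    using x(2) by (auto simp: zspan_iff)
  obtain n where n: "pow_kills p n x"
    using x(1) by (auto simp: primary_iff)
  show ?thesis
  proof (cases "coprime k (int p)")
    case True
    obtain M where "zmul (M * k) (f x) = f x"
      using coprime_zmul_inverse[OF pow_kills_endom[OF f n] True] by blast
    then have "f x = zmul M x"
      using k by (simp add: zmul_mult)
    then show ?thesis
      by (auto simp: zspan_iff)
  next
    case False
    then have "int p dvd k"
      using p by (metis coprime_commute prime_imp_coprime prime_nat_int_transfer)
    then obtain t where "k = int p * t"
      by (auto simp: dvd_def)
    then have "x = 0"
      using eq_0_if_pdvd_multiple_of_image[OF f _ n] k by blast
    then show ?thesis
      using endom_0[OF f] by simp
  qed
qed

lemma is_inv_multiplication_onI:
  assumes p: "prime p" and f: "endom f" and onto: "\<forall>x\<in>primary p. x \<in> f ` zspan x"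
  shows "is_inv_multiplication_on p f"
proof -
  have onto': "x \<in> zspan (f x)" if "x \<in> primary p" for x
    using onto that in_image_zspan_iff[OF f] by blast
  then have "is_multiplication_on p f"
    using is_multiplication_onI[OF p f] image_in_zspan_if_in_zspan_image[OF p f] by blast
  moreover have "inj_on f (primary p)"
  proof (rule inj_onI)
    fix x y
    assume xy: "x \<in> primary p" "y \<in> primary p" "f x = f y"
    then have "x - y \<in> zspan (f (x - y))"
      using onto' primary_diff by blast
    then show "x = y"
      using xy(3) by (simp add: endom_diff[OF f] zspan_iff)
  qed
  moreover have "f ` primary p = primary p"
    using onto primary_endom[OF f] zspan_subgrp[OF subgrp_primary] by blast
  ultimately show ?thesis
    by (simp add: is_inv_multiplication_on_def bij_betw_def)
qed

lemma is_inv_multiplication_on_iff: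
  assumes "prime p" "endom f"
  shows "is_inv_multiplication_on p f \<longleftrightarrow> (\<forall>x\<in>primary p. x \<in> f ` zspan x)"
  using is_inv_multiplication_onI[OF assms] is_inv_multiplication_on_onto[OF assms] by blast

section \<open>Primary decomposition and finite quotients\<close>

lemma coprime_order_split:
  assumes "coprime m n" "nmul (m * n) x = 0"
  obtains y z where "x = y + z" "nmul m y = 0" "nmul n z = 0" "y \<in> zspan x" "z \<in> zspan x"
proof -
  have "coprime (int m) (int n)"
    using assms(1) by simp
  then obtain u v where uv: "u * int m + v * int n = 1"
    using bezout_int[of "int m" "int n"] by auto
  define y where "y = zmul (v * int n) x"
  define z where "z = zmul (u * int m) x"
  have "x = y + z"
    unfolding y_def z_def zmul_add[symmetric] uv[unfolded add.commute[of "u * _"]] by simp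
  moreover have "int m * (v * int n) = v * int (m * n)" "int n * (u * int m) = u * int (m * n)"
    by simp_all
  then have "nmul m y = zmul v (nmul (m * n) x)" "nmul n z = zmul u (nmul (m * n) x)"
    unfolding y_def z_def zmul_of_nat[symmetric] zmul_mult[symmetric] by (simp_all only:)
  moreover have "y \<in> zspan x" "z \<in> zspan x"
    by (auto simp: y_def z_def zspan_iff)
  ultimately show ?thesis
    using that assms(2) by simp
qed

lemma add_sum_eq_sum_insert:
  assumes "finite S"
  shows "z + sum c S = (\<Sum>q\<in>insert p S. (if q = p then z else 0) + (if q \<in> S then c q else 0))"
proof -
  have "(\<Sum>q\<in>insert p S. if q \<in> S then c q else 0) = sum c S"
    using sum.inter_restrict[of "insert p S" c S] assms by (simp add: Int_absorb1 subset_insertI)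
  moreover have "(\<Sum>q\<in>insert p S. if q = p then z else 0) = z"
    using assms by simp
  ultimately show ?thesis
    by (simp only: sum.distrib)
qed

lemma split_off_prime_power:
  fixes n :: nat
  assumes "0 < n" "n \<noteq> 1"
  obtains p e m where "prime p" "n = m * p ^ e" "coprime m (p ^ e)" "0 < m" "m < n"
proof -
  obtain p where p: "prime p" "p dvd n"
    using prime_factor_nat[OF assms(2)] by blast
  obtain m where m: "n = p ^ multiplicity p n * m" "\<not> p dvd m"
  proof (rule multiplicity_decompose'[of n p])
    show "n \<noteq> 0" "\<not> is_unit p"
      using assms(1) prime_gt_1_nat[OF p(1)] by simp_all
  qed
  define e where "e = multiplicity p n"
  have n: "n = m * p ^ e"
    unfolding e_def by (subst mult.commute) (rule m(1))
  have "e \<noteq> 0"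
    using n m(2) p(2) by (intro notI) simp
  then have "1 < p ^ e"
    using prime_gt_1_nat[OF p(1)] one_less_power by blast
  then have "0 < m" "m < n"
    using n assms(1) by (auto intro: Nat.gr0I)
  moreover have "coprime m (p ^ e)"
    using prime_imp_coprime[OF p(1) m(2)] by (simp add: coprime_commute)
  ultimately show ?thesis
    using that p(1) n by blast
qed

lemma primary_decomposition_of_order:
  fixes x :: "'a::ab_group_add"
  assumes "0 < n" "nmul n x = 0"
  shows "\<exists>S c. finite S \<and> (\<forall>p\<in>S. prime p \<and> c p \<in> primary p \<and> c p \<in> zspan x) \<and> x = sum c S"
  using assms
proof (induct n arbitrary: x rule: less_induct)
  case (less n)
  show ?case
  proof (cases "n = 1")
    case True
    then show ?thesis
      using less.prems by (intro exI[of _ "{}"]) simp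
  next
    case False
    then obtain p e m where pem: "prime p" "n = m * p ^ e" "coprime m (p ^ e)" "0 < m" "m < n"
      using split_off_prime_power less.prems(1) by blast
    obtain y z where yz: "x = y + z" "nmul m y = 0" "nmul (p ^ e) z = 0"
      "y \<in> zspan x" "z \<in> zspan x"
      by (rule coprime_order_split[OF pem(3) less.prems(2)[unfolded pem(2)]])
    obtain S c where S: "finite S"
      "\<forall>q\<in>S. prime q \<and> c q \<in> primary q \<and> c q \<in> zspan y" "y = sum c S"
      using less.hyps[OF pem(5,4) yz(2)] by (elim exE conjE) (rule that; assumption)
    have z_p: "z \<in> primary p"
      using yz(3) unfolding primary_iff by blast
    define c' where "c' q = (if q = p then z else 0) + (if q \<in> S then c q else 0)" for q
    have "x = z + sum c S"
      using yz(1) S(3) by (simp add: add.commute)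
    then have "x = sum c' (insert p S)"
      unfolding c'_def by (simp only: add_sum_eq_sum_insert[OF S(1)])
    moreover have "prime q \<and> c' q \<in> primary q \<and> c' q \<in> zspan x" if "q \<in> insert p S" for q
      using that pem(1) S(2) z_p yz(5) zspan_trans[OF _ yz(4)]
      by (auto simp: c'_def intro!: primary_add zspan_add)
    ultimately show ?thesis
      using S(1) by (intro exI[of _ "insert p S"] exI[of _ c']) simp
  qed
qed

lemma primary_decomposition:
  fixes x :: "'a::ab_group_add"
  assumes "periodic_group TYPE('a)"
  shows "\<exists>S c. finite S \<and> (\<forall>p\<in>S. prime p \<and> c p \<in> primary p \<and> c p \<in> zspan x) \<and> x = sum c S"
proof -
  obtain n where "0 < n" "nmul n x = 0"
    using assms by (auto simp: periodic_group_def)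
  then show ?thesis
    by (rule primary_decomposition_of_order)
qed

lemma subgrp_primary_decomposition:
  fixes x :: "'a::ab_group_add"
  assumes "periodic_group TYPE('a)" and X: "subgrp X" "x \<in> X" and "finite B"
  shows "\<exists>T c z. finite T \<and> T \<inter> B = {} \<and> (\<forall>p\<in>T. prime p \<and> c p \<in> X \<inter> primary p)
    \<and> (\<forall>p\<in>B. z p \<in> X \<inter> primary p) \<and> x = sum c T + sum z B"
proof -
  obtain S c where S: "finite S" "\<forall>p\<in>S. prime p \<and> c p \<in> primary p \<and> c p \<in> zspan x"
    "x = sum c S"
    using primary_decomposition[OF assms(1), of x] by (elim exE conjE) (rule that; assumption)
  have c_X: "c p \<in> X" if "p \<in> S" for p
    using S(2) zspan_subgrp[OF X] that by blast
  define z where "z p = (if p \<in> S then c p else 0)" for p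
  have "x = sum c (S - B) + sum c (S \<inter> B)"
    using sum.Int_Diff[OF S(1), of c B] S(3) by (simp add: add.commute)
  also have "sum c (S \<inter> B) = sum z B"
    unfolding z_def Int_commute[of S B] by (rule sum.inter_restrict[OF \<open>finite B\<close>])
  finally have "x = sum c (S - B) + sum z B" .
  moreover have "\<forall>p\<in>B. z p \<in> X \<inter> primary p"
    using c_X S(2) subgrp_0[OF X(1)] unfolding z_def by auto
  moreover have "\<forall>p\<in>S - B. prime p \<and> c p \<in> X \<inter> primary p"
    using c_X S(2) by blast
  ultimately show ?thesis
    using S(1) by (intro exI[of _ "S - B"] exI[of _ c] exI[of _ z]) blast
qed

lemma finite_quot_reps:
  assumes "finite_quot Y Z" "0 \<in> Z"
  obtains R where "finite R" "\<forall>y\<in>Y. \<exists>r\<in>R. y - r \<in> Z"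
proof -
  define C where "C = (\<lambda>y. (\<lambda>x. y + x) ` Z) ` Y"
  have "\<exists>r. r \<in> Y \<and> D = (\<lambda>x. r + x) ` Z" if "D \<in> C" for D
    using that by (auto simp: C_def)
  then obtain rep where rep: "\<And>D. D \<in> C \<Longrightarrow> rep D \<in> Y \<and> D = (\<lambda>x. rep D + x) ` Z"
    by metis
  have "\<exists>r\<in>rep ` C. y - r \<in> Z" if y: "y \<in> Y" for y
  proof -
    define D where "D = (\<lambda>x. y + x) ` Z"
    have "D \<in> C"
      using y by (simp add: C_def D_def)
    moreover have "y \<in> D"
      using assms(2) by (force simp: D_def)
    ultimately obtain z where "z \<in> Z" "y = rep D + z"
      using rep by blast
    then show ?thesis
      using \<open>D \<in> C\<close> by force
  qed
  moreover have "finite (rep ` C)"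
    using assms(1) by (simp add: finite_quot_def C_def)
  ultimately show ?thesis
    using that by blast
qed

lemma coset_eq:
  assumes Z: "subgrp Z" and "y - r \<in> Z"
  shows "(\<lambda>x. y + x) ` Z = (\<lambda>x. r + x) ` Z"
proof (intro equalityI subsetI)
  fix w
  assume "w \<in> (\<lambda>x. y + x) ` Z"
  then obtain z where "z \<in> Z" "w = r + ((y - r) + z)"
    by auto
  then show "w \<in> (\<lambda>x. r + x) ` Z"
    using subgrp_add[OF Z assms(2)] by blast
next
  fix w
  assume "w \<in> (\<lambda>x. r + x) ` Z"
  then obtain z where "z \<in> Z" "w = y + (z - (y - r))"
    by auto
  then show "w \<in> (\<lambda>x. y + x) ` Z"
    using subgrp_diff[OF Z _ assms(2)] by blast
qed

lemma finite_quotI: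
  assumes Z: "subgrp Z" and "finite R" and "\<forall>y\<in>Y. \<exists>r\<in>R. y - r \<in> Z"
  shows "finite_quot Y Z"
proof -
  have "(\<lambda>y. (\<lambda>x. y + x) ` Z) ` Y \<subseteq> (\<lambda>r. (\<lambda>x. r + x) ` Z) ` R"
  proof
    fix D
    assume "D \<in> (\<lambda>y. (\<lambda>x. y + x) ` Z) ` Y"
    then obtain y where "y \<in> Y" "D = (\<lambda>x. y + x) ` Z"
      by blast
    moreover obtain r where "r \<in> R" "y - r \<in> Z"
      using assms(3) \<open>y \<in> Y\<close> by blast
    ultimately show "D \<in> (\<lambda>r. (\<lambda>x. r + x) ` Z) ` R"
      using coset_eq[OF Z] by blast
  qed
  then show ?thesis
    unfolding finite_quot_def using assms(2) by (meson finite_imageI finite_subset)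
qed

lemma finite_quot_of_finite_components:
  assumes Z: "subgrp Z" and B: "finite B"
    and fq: "\<forall>p\<in>B. finite_quot (Y' p) (Z' p)"
    and Z': "\<forall>p\<in>B. 0 \<in> Z' p \<and> Z' p \<subseteq> Z"
    and dec: "\<forall>y\<in>Y. \<exists>w z. w \<in> Z \<and> (\<forall>p\<in>B. z p \<in> Y' p) \<and> y = w + sum z B"
  shows "finite_quot Y Z"
proof -
  have "\<forall>p\<in>B. \<exists>R. finite R \<and> (\<forall>y\<in>Y' p. \<exists>r\<in>R. y - r \<in> Z' p)"
    using fq Z' finite_quot_reps by metis
  then obtain R where R: "\<forall>p\<in>B. finite (R p) \<and> (\<forall>y\<in>Y' p. \<exists>r\<in>R p. y - r \<in> Z' p)"
    by metis
  have "\<exists>r\<in>(\<lambda>g. sum g B) ` PiE B R. y - r \<in> Z" if "y \<in> Y" for y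
  proof -
    obtain w z where wz: "w \<in> Z" "\<forall>p\<in>B. z p \<in> Y' p" "y = w + sum z B"
      using dec \<open>y \<in> Y\<close> by blast
    have "\<forall>p\<in>B. \<exists>r\<in>R p. z p - r \<in> Z' p"
      using R wz(2) by blast
    then obtain g where g: "\<forall>p\<in>B. g p \<in> R p \<and> z p - g p \<in> Z' p"
      by metis
    have "y - sum g B = w + sum (\<lambda>p. z p - g p) B"
      using wz(3) by (simp add: sum_subtractf)
    moreover have "sum (\<lambda>p. z p - g p) B \<in> Z"
      using g Z' by (intro subgrp_sum[OF Z]) auto
    ultimately have "y - sum g B \<in> Z"
      using subgrp_add[OF Z wz(1)] by simp
    moreover have "sum g B = sum (restrict g B) B" "restrict g B \<in> PiE B R"
      using g by auto
    ultimately show ?thesis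
      by (metis image_eqI)
  qed
  moreover have "finite ((\<lambda>g. sum g B) ` PiE B R)"
    using B R by (intro finite_imageI finite_PiE) auto
  ultimately show ?thesis
    using finite_quotI[OF Z] by blast
qed

lemma finite_if_distinct_cosets:
  assumes fq: "finite_quot Y Z" and "0 \<in> Z" and "g ` P \<subseteq> Y"
    and distinct: "\<And>p q. p \<in> P \<Longrightarrow> q \<in> P \<Longrightarrow> g p - g q \<in> Z \<Longrightarrow> p = q"
  shows "finite P"
proof -
  let ?coset = "\<lambda>p. (\<lambda>x. g p + x) ` Z"
  have "inj_on ?coset P"
  proof (rule inj_onI)
    fix p q
    assume "p \<in> P" "q \<in> P" "?coset p = ?coset q"
    moreover have "g p \<in> ?coset p"
      using \<open>0 \<in> Z\<close> by force
    ultimately obtain x where "x \<in> Z" "g p = g q + x"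
      by auto
    then show "p = q"
      using distinct[OF \<open>p \<in> P\<close> \<open>q \<in> P\<close>] by (simp add: algebra_simps)
  qed
  moreover have "?coset ` P \<subseteq> (\<lambda>y. (\<lambda>x. y + x) ` Z) ` Y"
    using assms(3) by blast
  then have "finite (?coset ` P)"
    using fq unfolding finite_quot_def by (rule finite_subset)
  ultimately show ?thesis
    using finite_imageD by blast
qed

section \<open>Inertial endomorphisms\<close>

definition zspan_family :: "nat set \<Rightarrow> (nat \<Rightarrow> 'a::ab_group_add) \<Rightarrow> 'a set" where
  "zspan_family P a = {sum b F | F b. finite F \<and> F \<subseteq> P \<and> (\<forall>r\<in>F. b r \<in> zspan (a r))}"

lemma subgrp_zspan_family: "subgrp (zspan_family P a)"
  unfolding subgrp_def
proof (intro conjI ballI)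
  show "0 \<in> zspan_family P a"
    unfolding zspan_family_def by (intro CollectI exI[of _ "{}"]) auto
  fix x y
  assume "x \<in> zspan_family P a" "y \<in> zspan_family P a"
  then obtain F1 b1 F2 b2 where
    x: "x = sum b1 F1" "finite F1" "F1 \<subseteq> P" "\<forall>r\<in>F1. b1 r \<in> zspan (a r)" and
    y: "y = sum b2 F2" "finite F2" "F2 \<subseteq> P" "\<forall>r\<in>F2. b2 r \<in> zspan (a r)"
    unfolding zspan_family_def by blast
  define b where "b r = (if r \<in> F1 then b1 r else 0) - (if r \<in> F2 then b2 r else 0)" for r
  have fin: "finite (F1 \<union> F2)"
    using x y by simp
  have "sum b (F1 \<union> F2) = sum b1 ((F1 \<union> F2) \<inter> F1) - sum b2 ((F1 \<union> F2) \<inter> F2)"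
    unfolding b_def sum_subtractf sum.inter_restrict[OF fin] ..
  also have "\<dots> = x - y"
    using x y by (simp add: Int_absorb1)
  finally have "x - y = sum b (F1 \<union> F2)"
    by simp
  moreover have "b r \<in> zspan (a r)" for r
  proof -
    have "(if r \<in> F1 then b1 r else 0) \<in> zspan (a r)" "(if r \<in> F2 then b2 r else 0) \<in> zspan (a r)"
      using x(4) y(4) by auto
    then show ?thesis
      unfolding b_def by (rule subgrp_diff[OF subgrp_zspan])
  qed
  ultimately show "x - y \<in> zspan_family P a"
    unfolding zspan_family_def using fin x(3) y(3) by blast
qed

lemma zspan_family_mem: "p \<in> P \<Longrightarrow> a p \<in> zspan_family P a"
  unfolding zspan_family_def
  by (intro CollectI exI[of _ "{p}"] exI[of _ "\<lambda>_. a p"]) auto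

lemma endom_image_in_zspan_family:
  assumes f: "endom f" and x: "x \<in> zspan_family P a"
  shows "f x \<in> zspan_family P (\<lambda>r. f (a r))"
proof -
  obtain F b where F: "x = sum b F" "finite F" "F \<subseteq> P" "\<forall>r\<in>F. b r \<in> zspan (a r)"
    using x unfolding zspan_family_def by blast
  have "f y \<in> zspan (f a)" if "y \<in> zspan a" for y a
    using that by (auto simp: zspan_iff endom_zmul[OF f])
  then have "\<forall>r\<in>F. f (b r) \<in> zspan (f (a r))"
    using F(4) by blast
  moreover have "f x = (\<Sum>r\<in>F. f (b r))"
    using F(1) by (simp add: endom_sum[OF f])
  ultimately show ?thesis
    unfolding zspan_family_def using F(2,3) by blast
qed

lemma coprime_annihilator:
  assumes "finite F" and "\<forall>r\<in>F. prime r \<and> r \<noteq> p \<and> b r \<in> primary r" and "prime p"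
  shows "\<exists>N. coprime N (int p) \<and> zmul N (sum b F) = 0"
  using assms(1,2)
proof (induct F rule: finite_induct)
  case empty
  then show ?case
    by (intro exI[of _ 1]) simp
next
  case (insert r F)
  obtain N where N: "coprime N (int p)" "zmul N (sum b F) = 0"
    using insert.hyps(3) insert.prems by blast
  obtain t where t: "pow_kills r t (b r)"
    using insert.prems by (auto simp: primary_iff)
  have "coprime (int r ^ t) (int p)"
    using primes_coprime[of r p] insert.prems assms(3) by simp
  then have "coprime (N * int r ^ t) (int p)"
    using N(1) by simp
  have "zmul (N * int r ^ t) (b r) = 0"
    using t by (simp add: zmul_mult zmul_of_nat_power)
  moreover have "zmul (N * int r ^ t) (sum b F) = 0"
    using N(2) by (simp add: mult.commute[of N] zmul_mult)
  ultimately have "zmul (N * int r ^ t) (sum b (insert r F)) = 0"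
    using insert.hyps(1,2) by (simp add: zmul_distrib)
  with \<open>coprime (N * int r ^ t) (int p)\<close> show ?case
    by blast
qed

text \<open>A multiplier prime to \<open>p\<close> kills all other primary components and is invertible on \<open>A\<^sub>p\<close>.\<close>
lemma primary_component_in_zspan:
  assumes a: "\<forall>r\<in>P. prime r \<and> a r \<in> primary r" and x: "x \<in> zspan_family P a"
    and p: "p \<in> P" and q: "prime q" "q \<noteq> p" "e \<in> primary q"
    and c: "c \<in> primary p" "c = x + e"
  shows "c \<in> zspan (a p)"
proof -
  obtain F b where F: "x = sum b F" "finite F" "F \<subseteq> P" "\<forall>r\<in>F. b r \<in> zspan (a r)"
    using x unfolding zspan_family_def by blast
  have b: "\<forall>r\<in>F. prime r \<and> b r \<in> primary r"
    using F(3,4) a zspan_subgrp[OF subgrp_primary] by blast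
  define b\<^sub>p where "b\<^sub>p = (if p \<in> F then b p else 0)"
  have "b\<^sub>p \<in> zspan (a p)"
    using F(4) by (simp add: b\<^sub>p_def)
  have c_split: "c = b\<^sub>p + (sum b (F - {p}) + e)"
    using F(1,2) c(2) by (simp add: b\<^sub>p_def sum.remove)
  obtain N where N: "coprime N (int p)" "zmul N (sum b (F - {p})) = 0"
    using coprime_annihilator[of "F - {p}" p b] F(2) b a p by blast
  obtain t where t: "pow_kills q t e"
    using q(3) by (auto simp: primary_iff)
  have "coprime (int q ^ t) (int p)"
    using primes_coprime[of q p] q(1,2) a p by simp
  then have coprime: "coprime (N * int q ^ t) (int p)"
    using N(1) by simp
  have "zmul (N * int q ^ t) e = 0"
    using t by (simp add: zmul_mult zmul_of_nat_power)
  moreover have "zmul (N * int q ^ t) (sum b (F - {p})) = 0"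
    using N(2) by (simp add: mult.commute[of N] zmul_mult)
  ultimately have "zmul (N * int q ^ t) c = zmul (N * int q ^ t) b\<^sub>p"
    using c_split by (simp add: zmul_distrib)
  moreover obtain M where "zmul (M * (N * int q ^ t)) c = c"
    using coprime_zmul_inverse[OF _ coprime] c(1) unfolding primary_iff by metis
  ultimately have "c = zmul (M * (N * int q ^ t)) b\<^sub>p"
    by (simp add: zmul_mult)
  then show ?thesis
    using zspan_zmul[OF \<open>b\<^sub>p \<in> zspan (a p)\<close>] by simp
qed

lemma finite_non_multiplication_primes:
  fixes f :: "'a::ab_group_add \<Rightarrow> 'a"
  assumes f: "endom f" and inertial: "inertial f"
  shows "finite {p. prime p \<and> \<not> is_multiplication_on p f}"
proof -
  define P where "P = {p. prime p \<and> \<not> is_multiplication_on p f}"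
  have "\<forall>p\<in>P. \<exists>a\<in>primary p. f a \<notin> zspan a"
    using is_multiplication_on_iff[OF _ f] by (auto simp: P_def)
  then obtain a where a: "\<And>p. p \<in> P \<Longrightarrow> a p \<in> primary p \<and> f (a p) \<notin> zspan (a p)"
    by metis
  define X where "X = zspan_family P a"
  have X: "subgrp X"
    unfolding X_def by (rule subgrp_zspan_family)
  have "finite_quot (setsum (f ` X) X) X"
    using inertial X by (simp add: inertial_on_def)
  moreover have "(\<lambda>p. f (a p)) ` P \<subseteq> setsum (f ` X) X"
    using zspan_family_mem[of _ P a] subgrp_0[OF X]
    unfolding setsum_def X_def by force
  moreover have "p = q" if pq: "p \<in> P" "q \<in> P" and "f (a p) - f (a q) \<in> X" for p q
  proof (rule ccontr)
    assume "p \<noteq> q"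
    have "\<forall>r\<in>P. prime r \<and> a r \<in> primary r"
      using a by (simp add: P_def)
    then have "f (a p) \<in> zspan (a p)"
      using primary_component_in_zspan[of P a "f (a p) - f (a q)" p q "f (a q)" "f (a p)"]
        \<open>f (a p) - f (a q) \<in> X\<close> pq \<open>p \<noteq> q\<close> a primary_endom[OF f]
      by (auto simp: X_def P_def)
    then show False
      using a[OF pq(1)] by blast
  qed
  ultimately have "finite P"
    by (rule finite_if_distinct_cosets[OF _ subgrp_0[OF X]])
  then show ?thesis
    by (simp add: P_def)
qed

lemma finite_non_inv_multiplication_primes:
  fixes f :: "'a::ab_group_add \<Rightarrow> 'a"
  assumes f: "endom f" and left: "left_inertial f"
  shows "finite {p. prime p \<and> \<not> is_inv_multiplication_on p f}"
proof -
  define P where "P = {p. prime p \<and> \<not> is_inv_multiplication_on p f}"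
  have "\<forall>p\<in>P. \<exists>a\<in>primary p. a \<notin> f ` zspan a"
    using is_inv_multiplication_on_iff[OF _ f] by (auto simp: P_def)
  then obtain a where a: "\<And>p. p \<in> P \<Longrightarrow> a p \<in> primary p \<and> a p \<notin> f ` zspan (a p)"
    by metis
  define X where "X = zspan_family P a"
  have X: "subgrp X"
    unfolding X_def by (rule subgrp_zspan_family)
  have Z: "subgrp (X \<inter> f ` X)"
    using subgrp_Int[OF X subgrp_image[OF f X]] .
  have "finite_quot X (X \<inter> f ` X)"
    using left X by (simp add: left_inertial_on_def)
  moreover have "a ` P \<subseteq> X"
    using zspan_family_mem[of _ P a] by (auto simp: X_def)
  moreover have "p = q" if pq: "p \<in> P" "q \<in> P" and "a p - a q \<in> X \<inter> f ` X" for p q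
  proof (rule ccontr)
    assume "p \<noteq> q"
    obtain x where x: "x \<in> X" "a p - a q = f x"
      using \<open>a p - a q \<in> X \<inter> f ` X\<close> by blast
    have fa: "\<forall>r\<in>P. prime r \<and> f (a r) \<in> primary r"
      using a primary_endom[OF f] by (simp add: P_def)
    have "f x \<in> zspan_family P (\<lambda>r. f (a r))"
      using endom_image_in_zspan_family[OF f] x(1) by (simp add: X_def)
    moreover have "prime q" "q \<noteq> p" "a q \<in> primary q" "a p \<in> primary p"
      using pq(2) \<open>p \<noteq> q\<close> a[OF pq(1)] a[OF pq(2)] by (simp_all add: P_def)
    moreover have "a p = f x + a q"
      using x(2) by (metis diff_add_cancel)
    ultimately have "a p \<in> zspan (f (a p))"
      by (rule primary_component_in_zspan[OF fa _ pq(1)])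
    then show False
      using a[OF pq(1)] in_image_zspan_iff[OF f] by blast
  qed
  ultimately have "finite P"
    by (rule finite_if_distinct_cosets[OF _ subgrp_0[OF Z]])
  then show ?thesis
    by (simp add: P_def)
qed

lemma setsum_image_decomposition:
  fixes f :: "'a::ab_group_add \<Rightarrow> 'a"
  assumes per: "periodic_group TYPE('a)" and f: "endom f" and X: "subgrp X" and "finite B"
    and mult: "\<And>p. prime p \<Longrightarrow> p \<notin> B \<Longrightarrow> is_multiplication_on p f"
    and y: "y \<in> setsum (f ` X) X"
  shows "\<exists>w z. w \<in> X \<and> (\<forall>p\<in>B. z p \<in> setsum (f ` (X \<inter> primary p)) (X \<inter> primary p))
    \<and> y = w + sum z B"
proof -
  obtain x x' where x: "x \<in> X" "x' \<in> X" "y = f x + x'"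
    using y by (auto simp: setsum_def)
  obtain T c z where dec: "finite T" "T \<inter> B = {}" "\<forall>p\<in>T. prime p \<and> c p \<in> X \<inter> primary p"
    "\<forall>p\<in>B. z p \<in> X \<inter> primary p" "x = sum c T + sum z B"
    using subgrp_primary_decomposition[OF per X x(1) \<open>finite B\<close>]
    by (elim exE conjE) (rule that; assumption)
  have "f (c p) \<in> X" if "p \<in> T" for p
    using mult[of p] is_multiplication_on_zspan zspan_subgrp[OF X] dec(2,3) that by blast
  then have "(\<Sum>p\<in>T. f (c p)) \<in> X"
    by (rule subgrp_sum[OF X])
  then have "x' + (\<Sum>p\<in>T. f (c p)) \<in> X"
    by (rule subgrp_add[OF X x(2)])
  moreover have "\<forall>p\<in>B. f (z p) \<in> setsum (f ` (X \<inter> primary p)) (X \<inter> primary p)"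
    using dec(4) subgrp_0[OF subgrp_Int[OF X subgrp_primary]] unfolding setsum_def by force
  moreover have "y = (x' + (\<Sum>p\<in>T. f (c p))) + (\<Sum>p\<in>B. f (z p))"
    using x(3) dec(5) by (simp add: endom_add[OF f] endom_sum[OF f] algebra_simps)
  ultimately show ?thesis
    by (intro exI conjI)
qed

lemma subgrp_inv_decomposition:
  fixes f :: "'a::ab_group_add \<Rightarrow> 'a"
  assumes per: "periodic_group TYPE('a)" and f: "endom f" and X: "subgrp X" and "finite B"
    and inv: "\<And>p. prime p \<Longrightarrow> p \<notin> B \<Longrightarrow> is_inv_multiplication_on p f"
    and x: "x \<in> X"
  shows "\<exists>w z. w \<in> X \<inter> f ` X \<and> (\<forall>p\<in>B. z p \<in> X \<inter> primary p) \<and> x = w + sum z B"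
proof -
  obtain T c z where dec: "finite T" "T \<inter> B = {}" "\<forall>p\<in>T. prime p \<and> c p \<in> X \<inter> primary p"
    "\<forall>p\<in>B. z p \<in> X \<inter> primary p" "x = sum c T + sum z B"
    using subgrp_primary_decomposition[OF per X x \<open>finite B\<close>]
    by (elim exE conjE) (rule that; assumption)
  have "c p \<in> f ` X" if "p \<in> T" for p
  proof -
    have "c p \<in> f ` zspan (c p)"
      using inv[of p] is_inv_multiplication_on_onto[OF _ f] dec(2,3) that by blast
    then show ?thesis
      using zspan_subgrp[OF X] dec(3) that by blast
  qed
  then have "sum c T \<in> f ` X"
    by (rule subgrp_sum[OF subgrp_image[OF f X]])
  moreover have "sum c T \<in> X"
    using dec(3) by (intro subgrp_sum[OF X]) blast
  ultimately show ?thesis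
    using dec(4,5) by (intro exI conjI) auto
qed

lemma inertial_if_primary_components:
  fixes f :: "'a::ab_group_add \<Rightarrow> 'a"
  assumes per: "periodic_group TYPE('a)" and f: "endom f"
    and components: "\<forall>p. prime p \<longrightarrow> inertial_on (primary p) f"
    and finite_bad: "finite {p. prime p \<and> \<not> is_multiplication_on p f}"
  shows "inertial f"
  unfolding inertial_on_def
proof (intro allI impI)
  fix X :: "'a set"
  assume "subgrp X \<and> X \<subseteq> UNIV"
  then have X: "subgrp X"
    by simp
  let ?B = "{p. prime p \<and> \<not> is_multiplication_on p f}"
  have Xp: "subgrp (X \<inter> primary p)" for p
    using X subgrp_primary by (rule subgrp_Int)
  show "finite_quot (setsum (f ` X) X) X"
  proof (rule finite_quot_of_finite_components[OF X finite_bad,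
        where Y' = "\<lambda>p. setsum (f ` (X \<inter> primary p)) (X \<inter> primary p)" and Z' = "\<lambda>p. X \<inter> primary p"])
    show "\<forall>p\<in>?B. finite_quot (setsum (f ` (X \<inter> primary p)) (X \<inter> primary p)) (X \<inter> primary p)"
      using components Xp unfolding inertial_on_def by blast
    show "\<forall>p\<in>?B. 0 \<in> X \<inter> primary p \<and> X \<inter> primary p \<subseteq> X"
      using subgrp_0[OF Xp] by blast
    show "\<forall>y\<in>setsum (f ` X) X. \<exists>w z. w \<in> X
        \<and> (\<forall>p\<in>?B. z p \<in> setsum (f ` (X \<inter> primary p)) (X \<inter> primary p)) \<and> y = w + sum z ?B"
      using setsum_image_decomposition[OF per f X finite_bad] by blast
  qed
qed

lemma left_inertial_if_primary_components:
  fixes f :: "'a::ab_group_add \<Rightarrow> 'a"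
  assumes per: "periodic_group TYPE('a)" and f: "endom f"
    and components: "\<forall>p. prime p \<longrightarrow> left_inertial_on (primary p) f"
    and finite_bad: "finite {p. prime p \<and> \<not> is_inv_multiplication_on p f}"
  shows "left_inertial f"
  unfolding left_inertial_on_def
proof (intro allI impI)
  fix X :: "'a set"
  assume "subgrp X \<and> X \<subseteq> UNIV"
  then have X: "subgrp X"
    by simp
  let ?B = "{p. prime p \<and> \<not> is_inv_multiplication_on p f}"
  have Xp: "subgrp (X \<inter> primary p)" for p
    using X subgrp_primary by (rule subgrp_Int)
  show "finite_quot X (X \<inter> f ` X)"
  proof (rule finite_quot_of_finite_components[OF subgrp_Int[OF X subgrp_image[OF f X]] finite_bad,
        where Y' = "\<lambda>p. X \<inter> primary p" and Z' = "\<lambda>p. (X \<inter> primary p) \<inter> f ` (X \<inter> primary p)"])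
    show "\<forall>p\<in>?B. finite_quot (X \<inter> primary p) ((X \<inter> primary p) \<inter> f ` (X \<inter> primary p))"
      using components Xp unfolding left_inertial_on_def by blast
    show "\<forall>p\<in>?B. 0 \<in> (X \<inter> primary p) \<inter> f ` (X \<inter> primary p)
        \<and> (X \<inter> primary p) \<inter> f ` (X \<inter> primary p) \<subseteq> X \<inter> f ` X"
      using subgrp_0[OF Xp] subgrp_0[OF subgrp_image[OF f Xp]] by blast
    show "\<forall>x\<in>X. \<exists>w z. w \<in> X \<inter> f ` X \<and> (\<forall>p\<in>?B. z p \<in> X \<inter> primary p) \<and> x = w + sum z ?B"
      using subgrp_inv_decomposition[OF per f X finite_bad] by blast
  qed
qed

lemma inertial_on_mono: "inertial_on S f \<Longrightarrow> T \<subseteq> S \<Longrightarrow> inertial_on T f"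
  by (auto simp: inertial_on_def)

lemma left_inertial_on_mono: "left_inertial_on S f \<Longrightarrow> T \<subseteq> S \<Longrightarrow> left_inertial_on T f"
  by (auto simp: left_inertial_on_def)

theorem proposition3p2:
  fixes \<phi> :: "'a::ab_group_add \<Rightarrow> 'a"
  assumes "periodic_group TYPE('a)"
    and "endom \<phi>"
  shows "(inertial \<phi> \<longleftrightarrow>
            (\<forall>p. prime p \<longrightarrow> inertial_on (primary p) \<phi>) \<and>
            finite {p. prime p \<and> \<not> is_multiplication_on p \<phi>})
       \<and> (left_inertial \<phi> \<longleftrightarrow>
            (\<forall>p. prime p \<longrightarrow> left_inertial_on (primary p) \<phi>) \<and>
            finite {p. prime p \<and> \<not> is_inv_multiplication_on p \<phi>})"
proof (rule conjI; rule iffI)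
  assume "inertial \<phi>"
  then show "(\<forall>p. prime p \<longrightarrow> inertial_on (primary p) \<phi>) \<and>
      finite {p. prime p \<and> \<not> is_multiplication_on p \<phi>}"
    using inertial_on_mono finite_non_multiplication_primes[OF assms(2)] by blast
next
  assume "(\<forall>p. prime p \<longrightarrow> inertial_on (primary p) \<phi>) \<and>
      finite {p. prime p \<and> \<not> is_multiplication_on p \<phi>}"
  then show "inertial \<phi>"
    using inertial_if_primary_components[OF assms] by blast
next
  assume "left_inertial \<phi>"
  then show "(\<forall>p. prime p \<longrightarrow> left_inertial_on (primary p) \<phi>) \<and>
      finite {p. prime p \<and> \<not> is_inv_multiplication_on p \<phi>}"
    using left_inertial_on_mono finite_non_inv_multiplication_primes[OF assms(2)] by blast
next
  assume "(\<forall>p. prime p \<longrightarrow> left_inertial_on (primary p) \<phi>) \<and>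
      finite {p. prime p \<and> \<not> is_inv_multiplication_on p \<phi>}"
  then show "left_inertial \<phi>"
    using left_inertial_if_primary_components[OF assms] by blast
qed

end
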